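(* There exist constants $0<\varepsilon\le M<\infty$, $\rho\in\mathbb R$, $0<\alpha<\infty$ and $\beta>0$ such that, with $$\mathcal C:=\{(\lambda,\Gamma,\Theta):\ \varepsilon\le\lambda\le M,\ \rho I\preceq\Theta-\Gamma\preceq I,\ 0\preceq\Gamma\preceq\alpha I,\ \Gamma\in\mathbf D_n,\ \Theta\in\mathbf M_n,\ \hat\Sigma^{-1}+\lambda^{-1}(\Theta-\Gamma)\succeq\beta I\},$$ the problem $\min_{(\lambda,\Gamma,\Theta)\in\mathcal C_0}\tilde J(\lambda,\Gamma,\Theta)$ is equivalent to $\min_{(\lambda,\Gamma,\Theta)\in\mathcal C}\tilde J(\lambda,\Gamma,\Theta)$, in the sense that $\inf_{\mathcal C_0}\tilde J=\inf_{\mathcal C}\tilde J$; moreover both problems admit a solution (the infimum is attained on $\mathcal C$, hence also on $\mathcal C_0$).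
   Context: Notation: $\mathbf Q_n$ real symmetric $n\times n$ matrices; $\mathbf D_n$ diagonal matrices; $\mathbf M_n$ symmetric matrices with zero diagonal; $\chi:\mathbf Q_n\to\mathbf Q_n$ the orthogonal projection onto $\mathbf M_n$ (keeps off-diagonal entries, zeroes the diagonal); $|\cdot|$ the determinant. $\hat\Sigma\in\mathbf Q_n$, $\hat\Sigma\succ0$; $\delta_{max}:=\log|[\hat\Sigma^{-1}-\chi(\hat\Sigma^{-1})]\hat\Sigma|$, and $0<\delta<\delta_{max}$. Define $$\tilde J(\lambda,\Gamma,\Theta):=\lambda\Big(-\log\big|\hat\Sigma^{-1}+\lambda^{-1}(\chi(\Theta)-\Gamma)\big|-\log|\hat\Sigma|+\delta\Big),$$ $$\mathcal C_0:=\{(\lambda,\Gamma,\Theta)\in\mathbb R\times\mathbf Q_n\times\mathbf Q_n:\ \lambda>0,\ I+\Gamma-\chi(\Theta)\succeq0,\ \Gamma\succeq0,\ \hat\Sigma^{-1}+\lambda^{-1}(\chi(\Theta)-\Gamma)\succ0\}.$$ *)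

theory Defs
  imports "HOL-Analysis.Analysis"
begin

type_synonym 'n sqmat = "real ^ 'n ^ 'n"

definition symmetric_mat :: "'n::finite sqmat \<Rightarrow> bool" where
  "symmetric_mat A \<longleftrightarrow> transpose A = A"

definition diagonal_mat :: "'n::finite sqmat \<Rightarrow> bool" where
  "diagonal_mat A \<longleftrightarrow> (\<forall>i j. i \<noteq> j \<longrightarrow> A $ i $ j = 0)"

definition zero_diag_sym :: "'n::finite sqmat \<Rightarrow> bool" where
  "zero_diag_sym A \<longleftrightarrow> symmetric_mat A \<and> (\<forall>i. A $ i $ i = 0)"

definition chi_proj :: "'n::finite sqmat \<Rightarrow> 'n sqmat" where
  "chi_proj A = (\<chi> i j. if i = j then 0 else A $ i $ j)"

definition psd :: "'n::finite sqmat \<Rightarrow> bool" where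
  "psd A \<longleftrightarrow> (\<forall>x. 0 \<le> x \<bullet> (A *v x))"

definition pd :: "'n::finite sqmat \<Rightarrow> bool" where
  "pd A \<longleftrightarrow> (\<forall>x. x \<noteq> 0 \<longrightarrow> 0 < x \<bullet> (A *v x))"

definition loewner_le :: "'n::finite sqmat \<Rightarrow> 'n sqmat \<Rightarrow> bool" where
  "loewner_le A B \<longleftrightarrow> psd (B - A)"

definition delta_max :: "'n::finite sqmat \<Rightarrow> real" where
  "delta_max S = ln (det ((matrix_inv S - chi_proj (matrix_inv S)) ** S))"

definition Jtilde :: "'n::finite sqmat \<Rightarrow> real \<Rightarrow> real \<times> 'n sqmat \<times> 'n sqmat \<Rightarrow> real" where
  "Jtilde S \<delta> = (\<lambda>(lam, \<Gamma>, \<Theta>).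
     lam * (- ln (det (matrix_inv S + (1 / lam) *\<^sub>R (chi_proj \<Theta> - \<Gamma>))) - ln (det S) + \<delta>))"

definition C0 :: "'n::finite sqmat \<Rightarrow> (real \<times> 'n sqmat \<times> 'n sqmat) set" where
  "C0 S = {(lam, \<Gamma>, \<Theta>). symmetric_mat \<Gamma> \<and> symmetric_mat \<Theta> \<and> lam > 0 \<and>
      psd (mat 1 + \<Gamma> - chi_proj \<Theta>) \<and> psd \<Gamma> \<and>
      pd (matrix_inv S + (1 / lam) *\<^sub>R (chi_proj \<Theta> - \<Gamma>))}"

definition C_restr :: "'n::finite sqmat \<Rightarrow> real \<Rightarrow> real \<Rightarrow> real \<Rightarrow> real \<Rightarrow> real
      \<Rightarrow> (real \<times> 'n sqmat \<times> 'n sqmat) set" where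
  "C_restr S \<epsilon> M \<rho> \<alpha> \<beta> = {(lam, \<Gamma>, \<Theta>). \<epsilon> \<le> lam \<and> lam \<le> M \<and>
      loewner_le (\<rho> *\<^sub>R mat 1) (\<Theta> - \<Gamma>) \<and> loewner_le (\<Theta> - \<Gamma>) (mat 1) \<and>
      loewner_le 0 \<Gamma> \<and> loewner_le \<Gamma> (\<alpha> *\<^sub>R mat 1) \<and>
      diagonal_mat \<Gamma> \<and> zero_diag_sym \<Theta> \<and>
      loewner_le (\<beta> *\<^sub>R mat 1) (matrix_inv S + (1 / lam) *\<^sub>R (\<Theta> - \<Gamma>))}"

end

theory Submission
  imports Defs
begin

text \<open>
  The objective depends on \<open>(\<Gamma>, \<Theta>)\<close> only through \<open>K = \<chi>(\<Theta>) - \<Gamma>\<close>, so it suffices to minimise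
  \<open>G(\<lambda>, K) = \<lambda> (- log |\<Sigma>\<^sup>-\<^sup>1 + K/\<lambda>| - log |\<Sigma>| + \<delta>)\<close> over \<open>\<lambda> > 0\<close> and symmetric \<open>K \<preceq> I\<close> with
  nonpositive diagonal and \<open>\<Sigma>\<^sup>-\<^sup>1 + K/\<lambda> \<succ> 0\<close>. By Hadamard's inequality
  \<open>|\<Sigma>\<^sup>-\<^sup>1 + K/\<lambda>| \<le> \<Prod>\<^sub>i (\<Sigma>\<^sup>-\<^sup>1)\<^sub>i\<^sub>i\<close>, whence \<open>G \<ge> \<lambda> (\<delta> - \<delta>\<^sub>m\<^sub>a\<^sub>x)\<close>, with equality at
  \<open>K = -\<lambda> \<chi>(\<Sigma>\<^sup>-\<^sup>1)\<close>; and \<open>G > 0\<close> for large \<open>\<lambda>\<close>, because \<open>|\<Sigma>\<^sup>-\<^sup>1 + K/\<lambda>| \<le> |\<Sigma>\<^sup>-\<^sup>1 + I/\<lambda>| \<rightarrow> |\<Sigma>\<^sup>-\<^sup>1|\<close>.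
  Hence on a sublevel set below a negative value, \<open>\<lambda>\<close> ranges over a compact interval,
  \<open>|\<Sigma>\<^sup>-\<^sup>1 + K/\<lambda>|\<close> stays away from 0 and the entries of \<open>K\<close> are bounded: the sublevel set is
  compact and \<open>G\<close> attains its minimum. A minimiser splits as \<open>\<Gamma> = -diag K\<close>, \<open>\<Theta> = K + \<Gamma>\<close>,
  which lies in \<open>\<C>\<close> for suitable constants; since \<open>\<C> \<subseteq> \<C>\<^sub>0\<close>, it minimises over both sets.
\<close>

section \<open>Positive definite matrices\<close>

lemma inner_axis_mat_axis: "axis i 1 \<bullet> (M *v axis j 1) = (M::real^'n^'n) $ i $ j"
  by (simp add: matrix_vector_mult_basis inner_axis' column_def)

lemma symmetric_entry: "transpose M = M \<Longrightarrow> M $ j $ i = M $ i $ j"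
  by (metis transpose_def vec_lambda_beta)

lemma transpose_add: "transpose (A + B) = transpose A + transpose (B::real^'n^'n)"
  by (simp add: transpose_def vec_eq_iff)

lemma transpose_diff: "transpose (A - B) = transpose A - transpose (B::real^'n^'n)"
  by (simp add: transpose_def vec_eq_iff)

lemma matrix_add_rdistrib: "(A + B) ** C = A ** C + B ** (C::real^'n^'n)"
  by (simp add: matrix_matrix_mult_def vec_eq_iff sum.distrib algebra_simps)

lemma matrix_inv_mult:
  assumes "invertible (A::real^'n^'n)"
  shows "A ** matrix_inv A = mat 1" "matrix_inv A ** A = mat 1"
  using someI_ex[OF assms[unfolded invertible_def]] unfolding matrix_inv_def by auto

lemma psd_diag_nonneg: "psd M \<Longrightarrow> 0 \<le> (M::real^'n^'n) $ i $ i"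
  unfolding psd_def using inner_axis_mat_axis[of i M i] by metis

lemma pd_diag_pos: "pd M \<Longrightarrow> 0 < (M::real^'n^'n) $ i $ i"
  unfolding pd_def using inner_axis_mat_axis[of i M i] by (metis axis_eq_0_iff zero_neq_one)

lemma pd_imp_psd: "pd M \<Longrightarrow> psd (M::real^'n^'n)"
  unfolding pd_def psd_def by (metis inner_zero_left order.refl order.strict_implies_order)

lemma psd_offdiag_abs_le:
  assumes "psd M" "transpose M = M"
  shows "2 * \<bar>(M::real^'n^'n) $ i $ j\<bar> \<le> M $ i $ i + M $ j $ j"
proof -
  have "0 \<le> (axis i 1 + axis j 1) \<bullet> (M *v (axis i 1 + axis j 1))"
    using assms(1) unfolding psd_def by blast
  then have "0 \<le> M $ i $ i + M $ j $ j + 2 * M $ i $ j"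
    by (simp add: matrix_vector_right_distrib inner_add_left inner_add_right inner_axis_mat_axis
        symmetric_entry[OF assms(2), of i j])
  moreover have "0 \<le> (axis i 1 - axis j 1) \<bullet> (M *v (axis i 1 - axis j 1))"
    using assms(1) unfolding psd_def by blast
  then have "0 \<le> M $ i $ i + M $ j $ j - 2 * M $ i $ j"
    by (simp add: matrix_vector_mult_diff_distrib inner_diff_left inner_diff_right inner_axis_mat_axis
        symmetric_entry[OF assms(2), of i j])
  ultimately show ?thesis by linarith
qed

lemma loewner_le_scaleR_mat_1_iff:
  "loewner_le (c *\<^sub>R mat 1) (M::real^'n^'n) \<longleftrightarrow> (\<forall>x. c * (x \<bullet> x) \<le> x \<bullet> (M *v x))"
  unfolding loewner_le_def psd_def
  by (simp add: matrix_vector_mult_diff_rdistrib scaleR_matrix_vector_assoc[symmetric] inner_diff_right)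

lemma rayleigh_min_exists:
  fixes M :: "real^'n^'n"
  obtains u where "norm u = 1" "loewner_le ((u \<bullet> (M *v u)) *\<^sub>R mat 1) M"
proof -
  have "continuous_on (sphere 0 1) (\<lambda>x. x \<bullet> (M *v x))"
    by (intro continuous_intros linear_continuous_on matrix_vector_mul_bounded_linear)
  moreover have "sphere (0::real^'n) 1 \<noteq> {}" by simp
  ultimately obtain u where u: "u \<in> sphere 0 1"
    and min: "\<forall>y\<in>sphere 0 1. u \<bullet> (M *v u) \<le> y \<bullet> (M *v y)"
    using continuous_attains_inf[OF compact_sphere] by blast
  have "(u \<bullet> (M *v u)) * (x \<bullet> x) \<le> x \<bullet> (M *v x)" for x
  proof (cases "x = 0")
    case False
    let ?y = "(1 / norm x) *\<^sub>R x"
    have "?y \<in> sphere 0 1" using False by simp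
    then have "u \<bullet> (M *v u) \<le> ?y \<bullet> (M *v ?y)" using min by blast
    also have "\<dots> = (x \<bullet> (M *v x)) / (x \<bullet> x)"
      by (simp add: matrix_vector_mult_scaleR power2_norm_eq_inner[symmetric] power2_eq_square)
    finally show ?thesis using False by (simp add: pos_le_divide_eq)
  qed simp
  then show ?thesis using u by (intro that) (auto simp: loewner_le_scaleR_mat_1_iff)
qed

lemma continuous_on_det [continuous_intros]:
  fixes f :: "'a::topological_space \<Rightarrow> real^'n^'n"
  shows "continuous_on U f \<Longrightarrow> continuous_on U (\<lambda>x. det (f x))"
  unfolding det_def by (intro continuous_intros)

lemma continuous_on_matrix_vector_mult [continuous_intros]:
  fixes f :: "'a::topological_space \<Rightarrow> real^'n^'n"
  shows "continuous_on U f \<Longrightarrow> continuous_on U (\<lambda>z. f z *v x)"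
  unfolding matrix_vector_mult_def by (intro continuous_intros)

lemma continuous_on_transpose [continuous_intros]:
  fixes f :: "'a::topological_space \<Rightarrow> real^'n^'n"
  shows "continuous_on U f \<Longrightarrow> continuous_on U (\<lambda>z. transpose (f z))"
  unfolding transpose_def by (intro continuous_intros)

lemma psd_kernel:
  fixes M :: "real^'n^'n"
  assumes "psd M" "transpose M = M" "x \<bullet> (M *v x) = 0"
  shows "M *v x = 0"
proof (rule ccontr)
  define y where "y = M *v x"
  assume "M *v x \<noteq> 0"
  then have a: "0 < y \<bullet> y" unfolding y_def by simp
  have c: "0 \<le> y \<bullet> (M *v y)" using assms(1) unfolding psd_def by blast
  have "x \<bullet> (M *v y) = y \<bullet> y"
    unfolding y_def by (metis assms(2) dot_lmul_matrix inner_commute vector_transpose_matrix)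
  then have expand: "(x - t *\<^sub>R y) \<bullet> (M *v (x - t *\<^sub>R y)) = t * (t * (y \<bullet> (M *v y)) - 2 * (y \<bullet> y))" for t
    using assms(3) unfolding y_def
    by (simp add: matrix_vector_mult_diff_distrib matrix_vector_mult_scaleR inner_diff_left
        inner_diff_right algebra_simps power2_eq_square)
  \<comment> \<open>the form is negative at \<open>x - t M x\<close> for small \<open>t > 0\<close>\<close>
  define t where "t = (y \<bullet> y) / (y \<bullet> (M *v y) + 1)"
  have "0 < t" "t * (y \<bullet> (M *v y)) < y \<bullet> y" unfolding t_def using a c by (auto simp: field_simps)
  moreover have "0 \<le> t * (t * (y \<bullet> (M *v y)) - 2 * (y \<bullet> y))"
    using assms(1) expand unfolding psd_def by metis
  ultimately show False using a by (simp add: zero_le_mult_iff)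
qed

lemma pd_if_psd_det_nonzero:
  fixes M :: "real^'n^'n"
  assumes "psd M" "transpose M = M" "det M \<noteq> 0"
  shows "pd M"
  unfolding pd_def
proof (intro allI impI)
  fix x :: "real^'n" assume "x \<noteq> 0"
  moreover have "inj ((*v) M)" using assms(3) invertible_det_nz inj_matrix_vector_mult by blast
  ultimately have "x \<bullet> (M *v x) \<noteq> 0"
    using psd_kernel[OF assms(1,2)] by (metis injD matrix_vector_mult_0_right)
  moreover have "0 \<le> x \<bullet> (M *v x)" using assms(1) unfolding psd_def by blast
  ultimately show "0 < x \<bullet> (M *v x)" by linarith
qed

lemma quadratic_form_diagonal:
  fixes D :: "real^'n^'n"
  assumes "\<And>i j. i \<noteq> j \<Longrightarrow> D $ i $ j = 0"
  shows "x \<bullet> (D *v x) = (\<Sum>j\<in>UNIV. D $ j $ j * (x $ j)^2)"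
proof -
  have "(D *v x) $ i = D $ i $ i * x $ i" for i
  proof -
    have "(D *v x) $ i = (\<Sum>j\<in>UNIV. if j = i then D $ i $ i * x $ i else 0)"
      unfolding matrix_vector_mult_def vec_lambda_beta by (rule sum.cong) (auto simp: assms)
    then show ?thesis by simp
  qed
  then show ?thesis unfolding inner_vec_def by (simp add: power2_eq_square mult_ac)
qed

lemma psd_diagonal:
  fixes D :: "real^'n^'n"
  assumes "\<And>i j. i \<noteq> j \<Longrightarrow> D $ i $ j = 0" "\<And>i. 0 \<le> D $ i $ i"
  shows "psd D"
  unfolding psd_def by (simp add: quadratic_form_diagonal[OF assms(1)] assms(2) sum_nonneg)

lemma pd_diagonal:
  fixes D :: "real^'n^'n"
  assumes "\<And>i j. i \<noteq> j \<Longrightarrow> D $ i $ j = 0" "\<And>i. 0 < D $ i $ i"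
  shows "pd D"
  unfolding pd_def
proof (intro allI impI)
  fix x :: "real^'n" assume "x \<noteq> 0"
  then obtain i where "x $ i \<noteq> 0" by (metis vec_eq_iff zero_index)
  then have "0 < (\<Sum>j\<in>UNIV. D $ j $ j * (x $ j)^2)"
    using assms(2) by (intro sum_pos2[where i=i]) (auto simp: zero_le_mult_iff less_imp_le)
  then show "0 < x \<bullet> (D *v x)" by (simp add: quadratic_form_diagonal[OF assms(1)])
qed

lemma inner_congruence:
  fixes E B :: "real^'n^'n"
  shows "x \<bullet> ((transpose E ** B ** E) *v y) = (E *v x) \<bullet> (B *v (E *v y))"
proof -
  have "(transpose E ** B ** E) *v y = transpose E *v (B *v (E *v y))"
    by (simp only: matrix_vector_mul_assoc matrix_mul_assoc)
  then have "x \<bullet> ((transpose E ** B ** E) *v y) = ((B *v (E *v y)) v* E) \<bullet> x"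
    by (simp only: transpose_matrix_vector inner_commute)
  also have "\<dots> = (B *v (E *v y)) \<bullet> (E *v x)" by (rule dot_lmul_matrix)
  finally show ?thesis by (simp only: inner_commute)
qed

lemma congruence_entry:
  fixes E B :: "real^'n^'n"
  shows "(transpose E ** B ** E) $ i $ j = column i E \<bullet> (B *v column j E)"
proof -
  have "(transpose E ** B ** E) $ i $ j = (E *v axis i 1) \<bullet> (B *v (E *v axis j 1))"
    by (simp only: inner_axis_mat_axis[symmetric] inner_congruence)
  then show ?thesis by (simp only: matrix_vector_mult_basis)
qed

lemma symmetric_congruence:
  fixes E B :: "real^'n^'n"
  assumes "transpose B = B"
  shows "transpose (transpose E ** B ** E) = transpose E ** B ** E"
  by (simp only: matrix_transpose_mul transpose_transpose assms matrix_mul_assoc)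

lemma pd_congruence:
  fixes E B :: "real^'n^'n"
  assumes "pd B" "det E \<noteq> 0"
  shows "pd (transpose E ** B ** E)"
  unfolding pd_def inner_congruence
proof (intro allI impI)
  fix x :: "real^'n" assume "x \<noteq> 0"
  moreover have "inj ((*v) E)" using assms(2) invertible_det_nz inj_matrix_vector_mult by blast
  ultimately have "E *v x \<noteq> 0" by (metis injD matrix_vector_mult_0_right)
  then show "0 < (E *v x) \<bullet> (B *v (E *v x))" using assms(1) unfolding pd_def by blast
qed

lemma det_congruence_unimodular: "det E = 1 \<Longrightarrow> det (transpose E ** A ** E) = det (A::real^'n^'n)"
  by (simp add: det_mul)

lemma det_row_shear:
  fixes c :: "'n::finite \<Rightarrow> real"
  shows "det ((\<chi> i j. if i = k then (if j = k then 1 else c j) else (if i = j then 1 else 0))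
    :: real^'n^'n) = 1"
proof -
  have row_mat_1: "row j (mat 1 :: real^'n^'n) = axis j 1" for j
    by (simp add: row_def mat_def axis_def vec_eq_iff)
  define x :: "real^'n" where "x = (\<Sum>j\<in>UNIV - {k}. c j *\<^sub>R axis j 1)"
  have x: "x $ l = (if l = k then 0 else c l)" for l
  proof -
    have "x $ l = (\<Sum>j\<in>UNIV - {k}. (if l = j then c j else 0))"
      unfolding x_def sum_component by (intro sum.cong) (auto simp: axis_def)
    then show ?thesis by simp
  qed
  have "x \<in> vec.span {row j (mat 1 :: real^'n^'n) |j. j \<noteq> k}"
    unfolding x_def
  proof (intro vec.span_sum)
    fix j assume "j \<in> UNIV - {k}"
    then have "axis j 1 \<in> {row j (mat 1 :: real^'n^'n) |j. j \<noteq> k}" by (auto simp: row_mat_1)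
    then show "c j *\<^sub>R axis j 1 \<in> vec.span {row j (mat 1 :: real^'n^'n) |j. j \<noteq> k}"
      using vec.span_scale[OF vec.span_base, of "axis j 1" _ "c j"] by (simp add: scalar_mult_eq_scaleR)
  qed
  moreover have "((\<chi> i j. if i = k then (if j = k then 1 else c j) else (if i = j then 1 else 0)) :: real^'n^'n)
     = (\<chi> r. if r = k then row k (mat 1) + x else row r (mat 1))"
    by (auto simp: vec_eq_iff row_mat_1 x axis_def)
  ultimately show ?thesis by (simp add: det_row_span)
qed

lemma shear_congruence_clears_row:
  fixes B :: "real^'n^'n"
  assumes sym: "transpose B = B" and Bkk: "0 < B $ k $ k"
  obtains F where "det F = 1" "\<And>j. j \<noteq> k \<Longrightarrow> (transpose F ** B ** F) $ k $ j = 0"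
    "\<And>i j. i \<noteq> k \<Longrightarrow> (\<forall>j. j \<noteq> i \<longrightarrow> B $ i $ j = 0) \<Longrightarrow> j \<noteq> i \<Longrightarrow> (transpose F ** B ** F) $ i $ j = 0"
    "\<And>i. (transpose F ** B ** F) $ i $ i \<le> B $ i $ i"
proof -
  define c where "c j = - B $ k $ j / B $ k $ k" for j
  define F :: "real^'n^'n" where
    "F = (\<chi> i j. if i = k then (if j = k then 1 else c j) else (if i = j then 1 else 0))"
  have colF: "column j F = axis j 1 + (if j = k then 0 else c j *\<^sub>R axis k 1)" for j
    unfolding F_def column_def by (auto simp: vec_eq_iff axis_def)
  have entry: "(transpose F ** B ** F) $ i $ j = B $ i $ j + (if j = k then 0 else c j * B $ i $ k)
     + (if i = k then 0 else c i * B $ k $ j) + (if i = k \<or> j = k then 0 else c i * c j * B $ k $ k)"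
    for i j
    unfolding congruence_entry colF
    by (cases "i = k"; cases "j = k")
       (simp_all add: matrix_vector_right_distrib matrix_vector_mult_scaleR inner_add_left
         inner_add_right inner_axis_mat_axis algebra_simps)
  have Bs: "B $ i $ k = B $ k $ i" for i by (rule symmetric_entry[OF sym])
  show ?thesis
  proof (rule that)
    show "det F = 1" unfolding F_def by (rule det_row_shear)
    show "(transpose F ** B ** F) $ k $ j = 0" if "j \<noteq> k" for j
      using that Bkk by (simp add: entry c_def)
    show "(transpose F ** B ** F) $ i $ j = 0"
      if "i \<noteq> k" "\<forall>j. j \<noteq> i \<longrightarrow> B $ i $ j = 0" "j \<noteq> i" for i j
      using that Bs[of i] by (simp add: entry c_def)
    show "(transpose F ** B ** F) $ i $ i \<le> B $ i $ i" for i
    proof (cases "i = k")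
      case False
      then have "(transpose F ** B ** F) $ i $ i = B $ i $ i - (B $ i $ k)^2 / B $ k $ k"
        using Bkk Bs[of i] by (simp add: entry c_def field_simps power2_eq_square)
      then show ?thesis using Bkk by simp
    qed (simp add: entry)
  qed
qed

lemma pd_diagonal_congruence:
  fixes A :: "real^'n^'n"
  assumes sym: "transpose A = A" and pdA: "pd A"
  obtains E where "det E = 1" "\<And>i j. i \<noteq> j \<Longrightarrow> (transpose E ** A ** E) $ i $ j = 0"
    "\<And>i. 0 < (transpose E ** A ** E) $ i $ i" "\<And>i. (transpose E ** A ** E) $ i $ i \<le> A $ i $ i"
proof -
  have "finite J \<Longrightarrow> \<exists>E. det E = 1 \<and> (\<forall>i\<in>J. \<forall>j. j \<noteq> i \<longrightarrow> (transpose E ** A ** E) $ i $ j = 0)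
         \<and> (\<forall>i. (transpose E ** A ** E) $ i $ i \<le> A $ i $ i)" for J :: "'n set"
  proof (induction J rule: finite_induct)
    case empty
    show ?case by (rule exI[of _ "mat 1"]) simp
  next
    case (insert k J)
    obtain E where dE: "det E = 1" and zJ: "\<forall>i\<in>J. \<forall>j. j \<noteq> i \<longrightarrow> (transpose E ** A ** E) $ i $ j = 0"
      and dg: "\<forall>i. (transpose E ** A ** E) $ i $ i \<le> A $ i $ i" using insert.IH by blast
    define B where "B = transpose E ** A ** E"
    have "transpose B = B" unfolding B_def by (rule symmetric_congruence[OF sym])
    moreover have "0 < B $ k $ k" unfolding B_def using pd_congruence[OF pdA] dE by (simp add: pd_diag_pos)
    ultimately obtain F where F: "det F = 1" "\<And>j. j \<noteq> k \<Longrightarrow> (transpose F ** B ** F) $ k $ j = 0"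
      "\<And>i j. i \<noteq> k \<Longrightarrow> (\<forall>j. j \<noteq> i \<longrightarrow> B $ i $ j = 0) \<Longrightarrow> j \<noteq> i \<Longrightarrow> (transpose F ** B ** F) $ i $ j = 0"
      "\<And>i. (transpose F ** B ** F) $ i $ i \<le> B $ i $ i"
      using shear_congruence_clears_row by blast
    have eq: "transpose (E ** F) ** A ** (E ** F) = transpose F ** B ** F"
      unfolding B_def by (simp add: matrix_transpose_mul matrix_mul_assoc)
    show ?case
    proof (intro exI[of _ "E ** F"] conjI ballI allI impI)
      show "det (E ** F) = 1" unfolding det_mul dE F(1) by simp
      show "(transpose (E ** F) ** A ** (E ** F)) $ i $ j = 0" if "i \<in> insert k J" "j \<noteq> i" for i j
        using that F(2,3) zJ unfolding eq B_def by (cases "i = k") auto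
      show "(transpose (E ** F) ** A ** (E ** F)) $ i $ i \<le> A $ i $ i" for i
        using F(4)[of i] dg unfolding eq B_def by (meson order_trans)
    qed
  qed
  from this[of UNIV] obtain E where "det E = 1"
    "\<forall>i j. j \<noteq> i \<longrightarrow> (transpose E ** A ** E) $ i $ j = 0"
    "\<forall>i. (transpose E ** A ** E) $ i $ i \<le> A $ i $ i" by auto
  moreover have "\<forall>i. 0 < (transpose E ** A ** E) $ i $ i"
    using pd_diag_pos[OF pd_congruence[OF pdA]] \<open>det E = 1\<close> by simp
  ultimately show ?thesis using that by metis
qed

lemma hadamard_inequality:
  fixes A :: "real^'n^'n"
  assumes "transpose A = A" "pd A"
  shows "0 < det A" "det A \<le> (\<Prod>i\<in>UNIV. A $ i $ i)"
proof -
  obtain E where E: "det E = 1" "\<And>i j. i \<noteq> j \<Longrightarrow> (transpose E ** A ** E) $ i $ j = 0"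
    "\<And>i. 0 < (transpose E ** A ** E) $ i $ i" "\<And>i. (transpose E ** A ** E) $ i $ i \<le> A $ i $ i"
    using pd_diagonal_congruence[OF assms] by blast
  have det_A: "det A = (\<Prod>i\<in>UNIV. (transpose E ** A ** E) $ i $ i)"
    using det_diagonal[of "transpose E ** A ** E", OF E(2)] det_congruence_unimodular[OF E(1)] by simp
  then show "0 < det A" using E(3) by (simp add: prod_pos)
  show "det A \<le> (\<Prod>i\<in>UNIV. A $ i $ i)"
    unfolding det_A using E(3,4) by (intro prod_mono) (simp add: less_imp_le)
qed

lemma det_le_if_loewner_le:
  fixes A B :: "real^'n^'n"
  assumes symA: "transpose A = A" and symB: "transpose B = B" and pdA: "pd A"
    and AB: "loewner_le A B"
  shows "det A \<le> det B"
proof -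
  have gap: "0 \<le> x \<bullet> (B *v x) - x \<bullet> (A *v x)" for x
    using AB unfolding loewner_le_def psd_def by (metis inner_diff_right matrix_vector_mult_diff_rdistrib)
  have "pd B" using pdA gap unfolding pd_def by (meson add_less_le_mono add.right_neutral diff_ge_0_iff_ge less_le_trans)
  then obtain E where E: "det E = 1" "\<And>i j. i \<noteq> j \<Longrightarrow> (transpose E ** B ** E) $ i $ j = 0"
    "\<And>i. 0 < (transpose E ** B ** E) $ i $ i" "\<And>i. (transpose E ** B ** E) $ i $ i \<le> B $ i $ i"
    using pd_diagonal_congruence[OF symB] by blast
  define C where "C = transpose E ** A ** E"
  have "det A = det C" unfolding C_def using E(1) by (simp add: det_congruence_unimodular)
  also have "\<dots> \<le> (\<Prod>i\<in>UNIV. C $ i $ i)"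
    unfolding C_def using E(1) by (intro hadamard_inequality symmetric_congruence pd_congruence symA pdA) simp
  also have "\<dots> \<le> (\<Prod>i\<in>UNIV. (transpose E ** B ** E) $ i $ i)"
  proof (intro prod_mono conjI)
    fix i
    show "0 \<le> C $ i $ i"
      unfolding C_def using pd_congruence[OF pdA] E(1) by (simp add: less_imp_le pd_diag_pos)
    show "C $ i $ i \<le> (transpose E ** B ** E) $ i $ i"
      unfolding C_def congruence_entry using gap by (simp add: algebra_simps)
  qed
  also have "\<dots> = det B"
    using det_diagonal[of "transpose E ** B ** E", OF E(2)] det_congruence_unimodular[OF E(1)] by simp
  finally show ?thesis .
qed

lemma pd_matrix_inv:
  fixes S :: "real^'n^'n"
  assumes symS: "transpose S = S" and pdS: "pd S"
  shows "S ** matrix_inv S = mat 1" "matrix_inv S ** S = mat 1"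
    "transpose (matrix_inv S) = matrix_inv S" "pd (matrix_inv S)"
proof -
  have "invertible S" using hadamard_inequality(1)[OF assms] by (simp add: invertible_det_nz)
  then show right: "S ** matrix_inv S = mat 1" and left: "matrix_inv S ** S = mat 1"
    by (rule matrix_inv_mult)+
  have "transpose (matrix_inv S) = (matrix_inv S ** S) ** transpose (matrix_inv S)"
    using left by simp
  also have "\<dots> = matrix_inv S"
    using left symS by (metis matrix_mul_assoc matrix_mul_rid matrix_transpose_mul)
  finally show "transpose (matrix_inv S) = matrix_inv S" .
  show "pd (matrix_inv S)" unfolding pd_def
  proof (intro allI impI)
    fix x :: "real^'n" assume "x \<noteq> 0"
    define y where "y = matrix_inv S *v x"
    have Sy: "S *v y = x" unfolding y_def by (simp add: matrix_vector_mul_assoc right)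
    then have "y \<noteq> 0" using \<open>x \<noteq> 0\<close> by auto
    then have "0 < y \<bullet> (S *v y)" using pdS unfolding pd_def by blast
    then show "0 < x \<bullet> (matrix_inv S *v x)" using Sy unfolding y_def by (simp add: inner_commute)
  qed
qed

lemma det_identity_perturbation_lt:
  fixes A :: "real^'n^'n"
  assumes "1 < e"
  obtains t0 where "0 < t0" "\<And>t. \<bar>t\<bar> < t0 \<Longrightarrow> det (mat 1 + t *\<^sub>R A) < e"
proof -
  have "continuous_on UNIV (\<lambda>t::real. det (mat 1 + t *\<^sub>R A))"
    by (intro continuous_intros)
  moreover have "0 < e - 1" using assms by simp
  ultimately obtain d where "0 < d"
    "\<forall>t\<in>UNIV. dist t 0 < d \<longrightarrow> dist (det (mat 1 + t *\<^sub>R A)) (det (mat 1 + 0 *\<^sub>R A)) < e - 1"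
    unfolding continuous_on_iff by blast
  then show ?thesis by (intro that[of d]) (auto simp: dist_real_def abs_less_iff)
qed

lemma psd_identity_minus_entries_bounded:
  fixes K :: "real^'n^'n"
  assumes "transpose K = K" "psd (mat 1 - K)" "\<And>k. - d \<le> K $ k $ k" "\<And>k. K $ k $ k \<le> 0"
  shows "\<bar>K $ i $ j\<bar> \<le> 1 + d"
proof (cases "i = j")
  case True
  then show ?thesis using assms(3,4)[of i] by (simp add: abs_le_iff)
next
  case False
  have "transpose (mat 1 - K) = mat 1 - K" using assms(1) by (simp add: transpose_diff)
  then have "2 * \<bar>(mat 1 - K) $ i $ j\<bar> \<le> (mat 1 - K) $ i $ i + (mat 1 - K) $ j $ j"
    using assms(2) psd_offdiag_abs_le by blast
  then show ?thesis using False assms(3)[of i] assms(3)[of j] by (simp add: mat_def)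
qed

lemma norm_le_entries_bound:
  fixes K :: "real^'n^'n"
  assumes "\<And>i j. \<bar>K $ i $ j\<bar> \<le> R"
  shows "norm K \<le> real CARD('n) * (real CARD('n) * R)"
proof -
  have "norm K \<le> (\<Sum>i\<in>UNIV. norm (K $ i))"
    unfolding norm_vec_def by (rule L2_set_le_sum) simp
  also have "\<dots> \<le> (\<Sum>i\<in>(UNIV::'n set). real CARD('n) * R)"
  proof (rule sum_mono)
    fix i
    have "norm (K $ i) \<le> (\<Sum>j\<in>UNIV. \<bar>K $ i $ j\<bar>)" by (rule norm_le_l1_cart)
    also have "\<dots> \<le> (\<Sum>j\<in>(UNIV::'n set). R)" by (rule sum_mono) (rule assms)
    finally show "norm (K $ i) \<le> real CARD('n) * R" by simp
  qed
  finally show ?thesis by simp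
qed

section \<open>The reduced problem\<close>

lemma attains_inf_from_compact_sublevel:
  fixes f :: "'a::topological_space \<Rightarrow> real"
  assumes "compact W" "continuous_on W f" "W \<subseteq> D"
    and "\<And>z. z \<in> D \<Longrightarrow> f z \<le> c \<Longrightarrow> z \<in> W" "z0 \<in> D" "f z0 \<le> c"
  obtains z where "z \<in> D" "\<And>y. y \<in> D \<Longrightarrow> f z \<le> f y"
proof -
  have "W \<noteq> {}" using assms(4-6) by blast
  then obtain z where "z \<in> W" and min: "\<And>y. y \<in> W \<Longrightarrow> f z \<le> f y"
    using continuous_attains_inf[OF assms(1) _ assms(2)] by blast
  moreover have "f z \<le> f y" if "y \<in> D" for y
  proof (cases "f y \<le> c")
    case False
    then show ?thesis using min[of z0] assms(4-6) by force
  qed (use min assms(4) that in blast)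
  ultimately show ?thesis using that assms(3) by blast
qed

(* A point z = (\<lambda>, K) of the reduced problem stands for K = \<chi>(\<Theta>) - \<Gamma>. *)
definition reduced_matrix :: "real^'n^'n \<Rightarrow> real \<times> (real^'n^'n) \<Rightarrow> real^'n^'n" where
  "reduced_matrix S z = matrix_inv S + (1 / fst z) *\<^sub>R snd z"

definition reduced_objective :: "real^'n^'n \<Rightarrow> real \<Rightarrow> real \<times> (real^'n^'n) \<Rightarrow> real" where
  "reduced_objective S \<delta> z = fst z * (- ln (det (reduced_matrix S z)) - ln (det S) + \<delta>)"

definition reduced_domain :: "real^'n^'n \<Rightarrow> (real \<times> (real^'n^'n)) set" where
  "reduced_domain S = {z. 0 < fst z \<and> transpose (snd z) = snd z \<and> psd (mat 1 - snd z)
     \<and> (\<forall>i. snd z $ i $ i \<le> 0) \<and> pd (reduced_matrix S z)}"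

lemma Jtilde_eq_reduced_objective:
  "Jtilde S \<delta> (l, G, T) = reduced_objective S \<delta> (l, chi_proj T - G)"
  unfolding Jtilde_def reduced_objective_def reduced_matrix_def by simp

lemma C0_imp_reduced_domain:
  assumes "(l, G, T) \<in> C0 S"
  shows "(l, chi_proj T - G) \<in> reduced_domain S"
proof -
  have sym: "transpose G = G" "transpose T = T" and psd: "psd (mat 1 + G - chi_proj T)" "psd G"
    and "0 < l" "pd (matrix_inv S + (1 / l) *\<^sub>R (chi_proj T - G))"
    using assms unfolding C0_def symmetric_mat_def by auto
  moreover have "transpose (chi_proj T - G) = chi_proj T - G"
    using symmetric_entry[OF sym(1)] symmetric_entry[OF sym(2)]
    by (simp add: chi_proj_def transpose_def vec_eq_iff)
  moreover have "psd (mat 1 - (chi_proj T - G))"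
    using psd(1) by (simp add: algebra_simps)
  moreover have "(chi_proj T - G) $ i $ i \<le> 0" for i
    using psd_diag_nonneg[OF psd(2), of i] by (simp add: chi_proj_def)
  ultimately show ?thesis unfolding reduced_domain_def reduced_matrix_def by simp
qed

lemma C_restr_subset_C0:
  fixes S :: "real^'n^'n"
  assumes "0 < \<epsilon>" "0 < \<beta>"
  shows "C_restr S \<epsilon> M \<rho> \<alpha> \<beta> \<subseteq> C0 S"
proof
  fix y assume "y \<in> C_restr S \<epsilon> M \<rho> \<alpha> \<beta>"
  then obtain l G T where y: "y = (l, G, T)" and l: "\<epsilon> \<le> l"
    and le_1: "loewner_le (T - G) (mat 1)" and "loewner_le 0 G"
    and diag: "diagonal_mat G" and zd: "zero_diag_sym T"
    and beta: "loewner_le (\<beta> *\<^sub>R mat 1) (matrix_inv S + (1 / l) *\<^sub>R (T - G))"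
    unfolding C_restr_def by auto
  have chi: "chi_proj T = T" using zd unfolding zero_diag_sym_def chi_proj_def by (auto simp: vec_eq_iff)
  have "G $ j $ i = G $ i $ j" for i j using diag unfolding diagonal_mat_def by (cases "i = j") auto
  then have "symmetric_mat G" unfolding symmetric_mat_def by (simp add: transpose_def vec_eq_iff)
  moreover have "psd (mat 1 + G - chi_proj T)"
    using le_1 unfolding loewner_le_def chi by (simp add: algebra_simps)
  moreover have "pd (matrix_inv S + (1 / l) *\<^sub>R (chi_proj T - G))"
    unfolding pd_def chi
  proof (intro allI impI)
    fix x :: "real^'n" assume "x \<noteq> 0"
    then have "0 < \<beta> * (x \<bullet> x)" using assms(2) by simp
    also have "\<dots> \<le> x \<bullet> ((matrix_inv S + (1 / l) *\<^sub>R (T - G)) *v x)"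
      using beta unfolding loewner_le_scaleR_mat_1_iff by blast
    finally show "0 < x \<bullet> ((matrix_inv S + (1 / l) *\<^sub>R (T - G)) *v x)" .
  qed
  moreover have "psd G" "symmetric_mat T" "0 < l"
    using \<open>loewner_le 0 G\<close> zd l assms(1) unfolding loewner_le_def zero_diag_sym_def by auto
  ultimately show "y \<in> C0 S" unfolding y C0_def symmetric_mat_def by simp
qed

lemma reduced_matrix_symmetric_pd:
  assumes "transpose S = S" "pd S" "z \<in> reduced_domain S"
  shows "transpose (reduced_matrix S z) = reduced_matrix S z" "pd (reduced_matrix S z)"
  using assms pd_matrix_inv(3)[OF assms(1,2)]
  unfolding reduced_domain_def reduced_matrix_def by (auto simp: transpose_add transpose_scalar)

lemma delta_max_eq:
  assumes "transpose S = S" "pd S"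
  shows "delta_max S = ln (\<Prod>i\<in>UNIV. matrix_inv S $ i $ i) + ln (det S)"
proof -
  have "det (matrix_inv S - chi_proj (matrix_inv S)) = (\<Prod>i\<in>UNIV. matrix_inv S $ i $ i)"
    by (subst det_diagonal) (auto simp: chi_proj_def)
  moreover have "(\<Prod>i\<in>UNIV. matrix_inv S $ i $ i) \<noteq> 0 \<and> det S \<noteq> 0"
    using pd_diag_pos[OF pd_matrix_inv(4)[OF assms]] hadamard_inequality(1)[OF assms]
    by (simp add: prod_pos less_imp_neq[symmetric])
  ultimately show ?thesis
    unfolding delta_max_def det_mul by (simp only: ln_mult not_False_eq_True simp_thms if_True)
qed

lemma reduced_objective_lower_bound:
  assumes "transpose S = S" "pd S" "z \<in> reduced_domain S"
  shows "fst z * (\<delta> - delta_max S) \<le> reduced_objective S \<delta> z"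
proof -
  let ?A = "reduced_matrix S z"
  have l: "0 < fst z" and K: "\<And>i. snd z $ i $ i \<le> 0"
    using assms(3) unfolding reduced_domain_def by auto
  have A: "transpose ?A = ?A" "pd ?A" by (rule reduced_matrix_symmetric_pd[OF assms])+
  have "det ?A \<le> (\<Prod>i\<in>UNIV. ?A $ i $ i)" by (rule hadamard_inequality(2)[OF A])
  also have "\<dots> \<le> (\<Prod>i\<in>UNIV. matrix_inv S $ i $ i)"
  proof (rule prod_mono)
    fix i
    show "0 \<le> ?A $ i $ i \<and> ?A $ i $ i \<le> matrix_inv S $ i $ i"
      using pd_diag_pos[OF A(2), of i] K[of i] l
      by (simp add: reduced_matrix_def divide_nonpos_pos less_imp_le)
  qed
  finally have "ln (det ?A) \<le> ln (\<Prod>i\<in>UNIV. matrix_inv S $ i $ i)"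
    using hadamard_inequality(1)[OF A] by simp
  then have "\<delta> - delta_max S \<le> - ln (det ?A) - ln (det S) + \<delta>"
    unfolding delta_max_eq[OF assms(1,2)] by simp
  then show ?thesis unfolding reduced_objective_def using l by (simp add: mult_left_mono)
qed

lemma reduced_domain_point_at_lower_bound:
  fixes S :: "real^'n^'n"
  assumes "transpose S = S" "pd S"
  obtains z where "z \<in> reduced_domain S" "reduced_objective S \<delta> z = fst z * (\<delta> - delta_max S)"
proof -
  define Si where "Si = matrix_inv S"
  define Z where "Z = chi_proj Si"
  obtain u where "loewner_le ((u \<bullet> (Z *v u)) *\<^sub>R mat 1) Z" by (rule rayleigh_min_exists)
  then have Z_ge: "(u \<bullet> (Z *v u)) * (x \<bullet> x) \<le> x \<bullet> (Z *v x)" for x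
    unfolding loewner_le_scaleR_mat_1_iff by blast
  define l where "l = 1 / (\<bar>u \<bullet> (Z *v u)\<bar> + 1)"
  have l: "0 < l" "0 \<le> 1 + l * (u \<bullet> (Z *v u))"
    unfolding l_def by (auto simp: field_simps abs_le_iff)
  \<comment> \<open>for \<open>K = -l \<chi>(Si)\<close> the reduced matrix is the diagonal part of \<open>Si\<close>, where Hadamard is an equality\<close>
  define z where "z = (l, - l *\<^sub>R Z)"
  have diag: "reduced_matrix S z $ i $ j = (if i = j then Si $ i $ i else 0)" for i j
    using l unfolding reduced_matrix_def z_def Si_def Z_def chi_proj_def by simp
  have "z \<in> reduced_domain S"
    unfolding reduced_domain_def mem_Collect_eq
  proof (intro conjI allI)
    show "0 < fst z" using l unfolding z_def by simp
    show "transpose (snd z) = snd z"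
      using symmetric_entry[OF pd_matrix_inv(3)[OF assms]]
      unfolding z_def Z_def Si_def by (simp add: chi_proj_def transpose_def vec_eq_iff)
    show "psd (mat 1 - snd z)" unfolding psd_def
    proof
      fix x :: "real^'n"
      have "0 \<le> (1 + l * (u \<bullet> (Z *v u))) * (x \<bullet> x)" using l by simp
      also have "\<dots> \<le> x \<bullet> x + l * (x \<bullet> (Z *v x))"
        using mult_left_mono[OF Z_ge[of x], of l] l by (simp add: algebra_simps)
      also have "\<dots> = x \<bullet> ((mat 1 - snd z) *v x)"
        unfolding z_def by (simp add: algebra_simps scaleR_matrix_vector_assoc[symmetric])
      finally show "0 \<le> x \<bullet> ((mat 1 - snd z) *v x)" .
    qed
    show "snd z $ i $ i \<le> 0" for i unfolding z_def Z_def chi_proj_def by simp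
    show "pd (reduced_matrix S z)"
      using pd_diag_pos[OF pd_matrix_inv(4)[OF assms]] by (intro pd_diagonal) (simp_all add: diag Si_def)
  qed
  moreover have "det (reduced_matrix S z) = (\<Prod>i\<in>UNIV. Si $ i $ i)"
    by (subst det_diagonal) (simp_all add: diag)
  then have "reduced_objective S \<delta> z = fst z * (\<delta> - delta_max S)"
    unfolding reduced_objective_def delta_max_eq[OF assms] Si_def by simp
  ultimately show ?thesis by (rule that)
qed

lemma reduced_objective_pos_for_large_lambda:
  fixes S :: "real^'n^'n"
  assumes symS: "transpose S = S" and pdS: "pd S" and "0 < \<delta>"
  obtains L where "\<And>z. z \<in> reduced_domain S \<Longrightarrow> L < fst z \<Longrightarrow> 0 < reduced_objective S \<delta> z"
proof -
  obtain t0 where t0: "0 < t0" "\<And>t. \<bar>t\<bar> < t0 \<Longrightarrow> det (mat 1 + t *\<^sub>R S) < exp \<delta>"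
    using det_identity_perturbation_lt[of "exp \<delta>" S] assms(3) by auto
  have "0 < reduced_objective S \<delta> z" if z: "z \<in> reduced_domain S" and big: "1 / t0 < fst z" for z
  proof -
    define l where "l = fst z"
    define A where "A = reduced_matrix S z"
    define P where "P = matrix_inv S + (1 / l) *\<^sub>R mat 1"
    have l: "0 < l" and K: "transpose (snd z) = snd z" "psd (mat 1 - snd z)"
      using z unfolding reduced_domain_def l_def by auto
    have A: "transpose A = A" "pd A" unfolding A_def by (rule reduced_matrix_symmetric_pd[OF symS pdS z])+
    \<comment> \<open>\<open>K \<preceq> I\<close> gives \<open>A \<preceq> Si + I/l\<close>, and \<open>det (Si + I/l) det S = det (I + S/l)\<close> is close to 1\<close>
    have "loewner_le A P"
    proof -
      have "P - A = (1 / l) *\<^sub>R (mat 1 - snd z)"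
        unfolding P_def A_def reduced_matrix_def l_def by (simp add: algebra_simps)
      then show ?thesis using K(2) l unfolding loewner_le_def psd_def
        by (simp add: scaleR_matrix_vector_assoc[symmetric])
    qed
    moreover have "transpose P = P"
      unfolding P_def using pd_matrix_inv(3)[OF symS pdS] by (simp add: transpose_add transpose_scalar)
    ultimately have "det A \<le> det P" using A by (intro det_le_if_loewner_le)
    have pos: "0 < det S" "0 < det A"
      using hadamard_inequality(1)[OF symS pdS] hadamard_inequality(1)[OF A] by auto
    then have "det A * det S \<le> det P * det S" using \<open>det A \<le> det P\<close> by simp
    also have "\<dots> = det (mat 1 + (1 / l) *\<^sub>R S)"
      unfolding det_mul[symmetric] P_def
      by (simp add: matrix_add_rdistrib pd_matrix_inv(2)[OF symS pdS] scalar_matrix_assoc[symmetric])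
    also have "\<dots> < exp \<delta>"
      using big l t0 unfolding l_def by (intro t0(2)) (simp add: field_simps)
    finally have "det A * det S < exp \<delta>" .
    then have "ln (det A * det S) < \<delta>"
      using ln_less_cancel_iff[of "det A * det S" "exp \<delta>"] pos by simp
    then have "ln (det A) + ln (det S) < \<delta>"
      using pos by (simp add: ln_mult)
    then show ?thesis unfolding reduced_objective_def A_def[symmetric] l_def[symmetric] using l by simp
  qed
  then show ?thesis by (rule that)
qed

(* On this set max a (fst z) = fst z; the maximum keeps every constraint continuous on the
   whole space, so that the set is evidently closed. *)
definition reduced_core :: "real^'n^'n \<Rightarrow> real \<Rightarrow> real \<Rightarrow> real \<Rightarrow> (real \<times> (real^'n^'n)) set" where
  "reduced_core S a b \<eta> = {z. a \<le> fst z \<and> fst z \<le> b \<and> transpose (snd z) = snd z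
     \<and> psd (mat 1 - snd z) \<and> (\<forall>i. snd z $ i $ i \<le> 0)
     \<and> psd (reduced_matrix S (max a (fst z), snd z))
     \<and> \<eta> \<le> det (reduced_matrix S (max a (fst z), snd z))}"

lemma reduced_core_subset_domain:
  fixes S :: "real^'n^'n"
  assumes "transpose S = S" "pd S" "0 < a" "0 < \<eta>"
  shows "reduced_core S a b \<eta> \<subseteq> reduced_domain S"
proof
  fix z assume z: "z \<in> reduced_core S a b \<eta>"
  then have eq: "reduced_matrix S (max a (fst z), snd z) = reduced_matrix S z"
    unfolding reduced_core_def by (simp add: max_absorb2)
  have "transpose (reduced_matrix S z) = reduced_matrix S z"
    using z pd_matrix_inv(3)[OF assms(1,2)]
    unfolding reduced_core_def reduced_matrix_def by (simp add: transpose_add transpose_scalar)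
  then have "pd (reduced_matrix S z)"
    using z assms(4) unfolding reduced_core_def eq by (intro pd_if_psd_det_nonzero) auto
  then show "z \<in> reduced_domain S" using z assms(3) unfolding reduced_core_def reduced_domain_def by auto
qed

lemma bounded_reduced_core:
  fixes S :: "real^'n^'n"
  assumes "transpose S = S" "pd S" "0 < a"
  shows "bounded (reduced_core S a b \<eta>)"
proof -
  define T where "T = (\<Sum>i\<in>UNIV. matrix_inv S $ i $ i)"
  have Si_pos: "0 < matrix_inv S $ i $ i" for i by (rule pd_diag_pos[OF pd_matrix_inv(4)[OF assms(1,2)]])
  then have Si_le: "matrix_inv S $ i $ i \<le> T" for i
    unfolding T_def by (intro member_le_sum) (auto intro: less_imp_le)
  define R where "R = real CARD('n) * (real CARD('n) * (1 + b * T))"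
  have "reduced_core S a b \<eta> \<subseteq> {a..b} \<times> cball 0 R"
  proof (clarsimp simp: mem_Times_iff)
    fix l K assume z: "(l, K) \<in> reduced_core S a b \<eta>"
    then have l: "a \<le> l" "l \<le> b" and K: "transpose K = K" "psd (mat 1 - K)" "\<And>k. K $ k $ k \<le> 0"
      and A: "psd (reduced_matrix S (l, K))"
      unfolding reduced_core_def by (auto simp: max_absorb2)
    \<comment> \<open>the diagonal of \<open>Si + K/l\<close> is nonnegative, so \<open>K\<^sub>k\<^sub>k \<ge> -l Si\<^sub>k\<^sub>k \<ge> -b T\<close>\<close>
    have "- (b * T) \<le> K $ k $ k" for k
    proof -
      have "0 \<le> matrix_inv S $ k $ k + K $ k $ k / l"
        using psd_diag_nonneg[OF A, of k] by (simp add: reduced_matrix_def)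
      then have "- (l * matrix_inv S $ k $ k) \<le> K $ k $ k" using l assms(3) by (simp add: field_simps)
      moreover have "l * matrix_inv S $ k $ k \<le> b * T"
        using l assms(3) Si_pos[of k] Si_le[of k] by (intro mult_mono) auto
      ultimately show ?thesis by linarith
    qed
    then have "\<bar>K $ i $ j\<bar> \<le> 1 + b * T" for i j
      using K by (intro psd_identity_minus_entries_bounded) auto
    then show "a \<le> l \<and> l \<le> b \<and> norm K \<le> R"
      using l unfolding R_def by (simp add: norm_le_entries_bound)
  qed
  then show ?thesis by (rule bounded_subset[rotated]) (intro bounded_Times bounded_cball bounded_closed_interval)
qed

lemma compact_reduced_core:
  fixes S :: "real^'n^'n"
  assumes "transpose S = S" "pd S" "0 < a"
  shows "compact (reduced_core S a b \<eta>)"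
proof -
  have "closed (reduced_core S a b \<eta>)"
    unfolding reduced_core_def reduced_matrix_def psd_def
    by (intro closed_Collect_conj closed_Collect_all closed_Collect_le closed_Collect_eq continuous_intros)
       (use assms(3) in \<open>auto simp: max_def\<close>)
  then show ?thesis using bounded_reduced_core[OF assms] by (simp add: compact_eq_bounded_closed)
qed

lemma continuous_on_reduced_objective_core:
  fixes S :: "real^'n^'n"
  assumes "0 < a" "0 < \<eta>"
  shows "continuous_on (reduced_core S a b \<eta>) (reduced_objective S \<delta>)"
proof -
  have "continuous_on (reduced_core S a b \<eta>)
      (\<lambda>z. fst z * (- ln (det (reduced_matrix S (max a (fst z), snd z))) - ln (det S) + \<delta>))"
    unfolding reduced_matrix_def
    by (intro continuous_intros) (use assms in \<open>auto simp: reduced_core_def reduced_matrix_def max_def\<close>)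
  then show ?thesis
    by (rule continuous_on_cong[THEN iffD1, OF refl, rotated])
       (auto simp: reduced_core_def reduced_objective_def max_absorb2)
qed

lemma reduced_objective_attains_min:
  fixes S :: "real^'n^'n"
  assumes symS: "transpose S = S" and pdS: "pd S" and "0 < \<delta>" "\<delta> < delta_max S"
  obtains z where "z \<in> reduced_domain S"
    "\<And>y. y \<in> reduced_domain S \<Longrightarrow> reduced_objective S \<delta> z \<le> reduced_objective S \<delta> y"
proof -
  obtain z0 where z0: "z0 \<in> reduced_domain S" "reduced_objective S \<delta> z0 = fst z0 * (\<delta> - delta_max S)"
    by (rule reduced_domain_point_at_lower_bound[OF symS pdS])
  obtain L where L: "\<And>z. z \<in> reduced_domain S \<Longrightarrow> L < fst z \<Longrightarrow> 0 < reduced_objective S \<delta> z"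
    using reduced_objective_pos_for_large_lambda[OF symS pdS \<open>0 < \<delta>\<close>] by blast
  have l0: "0 < fst z0" using z0(1) unfolding reduced_domain_def by simp
  define c where "c = reduced_objective S \<delta> z0"
  have "c < 0" unfolding c_def z0(2) using l0 assms(4) by (simp add: mult_pos_neg)
  define \<eta> where "\<eta> = exp (\<delta> - ln (det S))"
  define W where "W = reduced_core S (fst z0) (max (fst z0) L) \<eta>"
  have sublevel: "z \<in> W" if z: "z \<in> reduced_domain S" and "reduced_objective S \<delta> z \<le> c" for z
  proof -
    have "fst z * (\<delta> - delta_max S) \<le> fst z0 * (\<delta> - delta_max S)"
      using reduced_objective_lower_bound[OF symS pdS z, of \<delta>] \<open>reduced_objective S \<delta> z \<le> c\<close>
      unfolding c_def z0(2) by linarith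
    then have lo: "fst z0 \<le> fst z" using assms(4) by simp
    have hi: "fst z \<le> max (fst z0) L" using L[OF z] \<open>reduced_objective S \<delta> z \<le> c\<close> \<open>c < 0\<close> by force
    have l: "0 < fst z" and pd: "pd (reduced_matrix S z)" using z unfolding reduced_domain_def by auto
    have "fst z * (- ln (det (reduced_matrix S z)) - ln (det S) + \<delta>) < 0"
      using \<open>reduced_objective S \<delta> z \<le> c\<close> \<open>c < 0\<close> unfolding reduced_objective_def by linarith
    then have "- ln (det (reduced_matrix S z)) - ln (det S) + \<delta> < 0"
      using l by (simp add: mult_less_0_iff)
    then have "exp (\<delta> - ln (det S)) < exp (ln (det (reduced_matrix S z)))" by simp
    then have "\<eta> \<le> det (reduced_matrix S z)"
      using hadamard_inequality(1)[OF reduced_matrix_symmetric_pd[OF symS pdS z]] unfolding \<eta>_def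
      by simp
    moreover have "psd (reduced_matrix S z)" using pd by (rule pd_imp_psd)
    ultimately show "z \<in> W"
      using z lo hi unfolding W_def reduced_core_def reduced_domain_def by (simp add: max_absorb2)
  qed
  show ?thesis
    using attains_inf_from_compact_sublevel[OF
        compact_reduced_core[OF symS pdS l0]
        continuous_on_reduced_objective_core[OF l0]
        reduced_core_subset_domain[OF symS pdS l0]
        sublevel[unfolded W_def] z0(1)] that
    unfolding c_def \<eta>_def by auto
qed

lemma reduced_domain_lift:
  fixes S :: "real^'n^'n"
  assumes z: "z \<in> reduced_domain S"
  obtains \<rho> \<alpha> \<beta> p where "0 < \<alpha>" "0 < \<beta>" "p \<in> C_restr S (fst z) (fst z) \<rho> \<alpha> \<beta>"
    "Jtilde S \<delta> p = reduced_objective S \<delta> z"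
proof -
  define l where "l = fst z"
  define K where "K = snd z"
  have K: "transpose K = K" "psd (mat 1 - K)" "\<And>i. K $ i $ i \<le> 0" and pdA: "pd (reduced_matrix S z)"
    using z unfolding reduced_domain_def K_def by auto
  define \<Gamma> :: "real^'n^'n" where "\<Gamma> = (\<chi> i j. if i = j then - K $ i $ i else 0)"
  define \<Theta> where "\<Theta> = K + \<Gamma>"
  have \<Gamma>: "\<Gamma> $ i $ j = (if i = j then - K $ i $ i else 0)" for i j unfolding \<Gamma>_def by simp
  have \<Theta>_minus_\<Gamma>: "\<Theta> - \<Gamma> = K" unfolding \<Theta>_def by simp
  have chi_\<Theta>: "chi_proj \<Theta> = \<Theta>" unfolding \<Theta>_def chi_proj_def by (auto simp: vec_eq_iff \<Gamma>)
  obtain u1 where \<rho>: "loewner_le ((u1 \<bullet> (K *v u1)) *\<^sub>R mat 1) K" by (rule rayleigh_min_exists)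
  obtain u2 where "norm u2 = 1"
    and \<beta>: "loewner_le ((u2 \<bullet> (reduced_matrix S z *v u2)) *\<^sub>R mat 1) (reduced_matrix S z)"
    by (rule rayleigh_min_exists)
  then have \<beta>_pos: "0 < u2 \<bullet> (reduced_matrix S z *v u2)"
    using pdA unfolding pd_def by (metis norm_zero zero_neq_one)
  define \<alpha> where "\<alpha> = 1 + (\<Sum>i\<in>UNIV. - K $ i $ i)"
  have sum_ge: "- K $ i $ i \<le> (\<Sum>i\<in>UNIV. - K $ i $ i)" for i by (rule member_le_sum) (auto simp: K(3))
  have \<alpha>_ge: "0 \<le> \<alpha> + K $ i $ i" for i using sum_ge[of i] unfolding \<alpha>_def by linarith
  have \<alpha>: "0 < \<alpha>" using sum_ge[of undefined] K(3)[of undefined] unfolding \<alpha>_def by linarith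
  have "(l, \<Gamma>, \<Theta>) \<in> C_restr S l l (u1 \<bullet> (K *v u1)) \<alpha> (u2 \<bullet> (reduced_matrix S z *v u2))"
    unfolding C_restr_def mem_Collect_eq prod.case \<Theta>_minus_\<Gamma>
  proof (intro conjI order_refl)
    show "loewner_le K (mat 1)" using K(2) unfolding loewner_le_def .
    show "loewner_le 0 \<Gamma>" unfolding loewner_le_def by (rule psd_diagonal) (auto simp: \<Gamma> K(3))
    show "loewner_le \<Gamma> (\<alpha> *\<^sub>R mat 1)" unfolding loewner_le_def
      using \<alpha>_ge by (intro psd_diagonal) (auto simp: \<Gamma> mat_def)
    show "diagonal_mat \<Gamma>" unfolding diagonal_mat_def by (simp add: \<Gamma>)
    show "zero_diag_sym \<Theta>" unfolding zero_diag_sym_def symmetric_mat_def \<Theta>_def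
      using symmetric_entry[OF K(1)] by (auto simp: transpose_def vec_eq_iff \<Gamma>)
    show "loewner_le ((u2 \<bullet> (reduced_matrix S z *v u2)) *\<^sub>R mat 1) (matrix_inv S + (1 / l) *\<^sub>R K)"
      using \<beta> unfolding reduced_matrix_def l_def K_def .
  qed (use \<rho> in simp)
  moreover have "Jtilde S \<delta> (l, \<Gamma>, \<Theta>) = reduced_objective S \<delta> z"
    unfolding Jtilde_eq_reduced_objective chi_\<Theta> \<Theta>_minus_\<Gamma> l_def K_def by simp
  ultimately show ?thesis using \<alpha> \<beta>_pos that unfolding l_def by blast
qed

theorem theorem1:
  fixes S :: "real ^ 'n ^ 'n" and \<delta> :: real
  assumes "symmetric_mat S" and "pd S"
    and "0 < \<delta>" and "\<delta> < delta_max S"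
  shows "\<exists>\<epsilon> M \<rho> \<alpha> \<beta>. 0 < \<epsilon> \<and> \<epsilon> \<le> M \<and> 0 < \<alpha> \<and> 0 < \<beta> \<and>
     (\<exists>p\<in>C_restr S \<epsilon> M \<rho> \<alpha> \<beta>. \<exists>q\<in>C0 S.
        (\<forall>y\<in>C_restr S \<epsilon> M \<rho> \<alpha> \<beta>. Jtilde S \<delta> p \<le> Jtilde S \<delta> y) \<and>
        (\<forall>y\<in>C0 S. Jtilde S \<delta> q \<le> Jtilde S \<delta> y) \<and>
        Jtilde S \<delta> p = Jtilde S \<delta> q)"
proof -
  have symS: "transpose S = S" using assms(1) unfolding symmetric_mat_def .
  obtain z where z: "z \<in> reduced_domain S"
    and z_min: "\<And>y. y \<in> reduced_domain S \<Longrightarrow> reduced_objective S \<delta> z \<le> reduced_objective S \<delta> y"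
    using reduced_objective_attains_min[OF symS assms(2-4)] by blast
  obtain \<rho> \<alpha> \<beta> p where \<alpha>: "0 < \<alpha>" and \<beta>: "0 < \<beta>" and p: "p \<in> C_restr S (fst z) (fst z) \<rho> \<alpha> \<beta>"
    and Jp: "Jtilde S \<delta> p = reduced_objective S \<delta> z"
    by (rule reduced_domain_lift[OF z])
  have l: "0 < fst z" using z unfolding reduced_domain_def by simp
  have C_sub: "C_restr S (fst z) (fst z) \<rho> \<alpha> \<beta> \<subseteq> C0 S" by (rule C_restr_subset_C0[OF l \<beta>])
  have p_min: "Jtilde S \<delta> p \<le> Jtilde S \<delta> y" if "y \<in> C0 S" for y
  proof -
    obtain l' \<Gamma> \<Theta> where y: "y = (l', \<Gamma>, \<Theta>)" by (cases y) auto
    show ?thesis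
      using z_min[OF C0_imp_reduced_domain[OF that[unfolded y]]]
      unfolding y Jp Jtilde_eq_reduced_objective .
  qed
  show ?thesis
  proof (intro exI conjI bexI ballI)
    show "0 < fst z" "fst z \<le> fst z" "0 < \<alpha>" "0 < \<beta>" by (simp_all add: l \<alpha> \<beta>)
    show "p \<in> C_restr S (fst z) (fst z) \<rho> \<alpha> \<beta>" "p \<in> C0 S" using p C_sub by blast+
    show "Jtilde S \<delta> p = Jtilde S \<delta> p" ..
    fix y assume "y \<in> C_restr S (fst z) (fst z) \<rho> \<alpha> \<beta>"
    then show "Jtilde S \<delta> p \<le> Jtilde S \<delta> y" using C_sub p_min by blast
  next
    fix y assume "y \<in> C0 S"
    then show "Jtilde S \<delta> p \<le> Jtilde S \<delta> y" by (rule p_min)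
  qed
qed

end
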